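(* Let $\mathfrak g$ be a $9$-dimensional filiform Lie algebra with associated triple $(5,6,9)$, with parameters $\alpha_1,\alpha_2,\gamma_1,\gamma_2,\beta_{12},\beta_{22},\beta_{13},\beta_{23},\beta_{33}$ with respect to an adapted basis $\{e_h\}$. Then $\alpha_1=0$, $(2\alpha_2+3\gamma_1)(\alpha_2-\gamma_1)=0$ and $\gamma_1\ne0$; moreover $[C^3\mathfrak g,C^3\mathfrak g]=[C^3\mathfrak g,C^4\mathfrak g]=\langle e_2\rangle$, $[C^3\mathfrak g,C^5\mathfrak g]=\{0\}$, $[C^2\mathfrak g,C^6\mathfrak g]=\{0\}$, $[C^2\mathfrak g,C^5\mathfrak g]=\langle e_2\rangle$, $[C^2\mathfrak g,C^4\mathfrak g]=\langle e_2,e_3\rangle$, $[C^2\mathfrak g,C^2\mathfrak g]=[C^2\mathfrak g,C^3\mathfrak g]=\langle e_2,e_3,e_4\rangle$. Consequently every such $\mathfrak g$ has the same Hilbert polynomial: $$\mathrm{HP}_{\mathfrak g}-\mathrm{HP}^{(0)}_{\mathfrak g}=3(t^2s^2+t^2s^3+t^3s^2)+2(t^2s^4+t^4s^2)+(t^2s^5+t^5s^2)+(t^3s^3+t^3s^4+t^4s^3).$$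
   Context: All Lie algebras are over $\mathbb C$; $C^1\mathfrak g=\mathfrak g$, $C^k\mathfrak g=[C^{k-1}\mathfrak g,\mathfrak g]$. A Lie algebra is filiform if $\dim\mathfrak g=n\ge2$ and $\dim C^k\mathfrak g=n-k$ for $2\le k\le n$. An adapted basis of a filiform $\mathfrak g$ is a basis $\{e_1,\dots,e_n\}$ with $[e_1,e_h]=e_{h-1}$ ($3\le h\le n$), $[e_2,e_h]=0$ ($1\le h\le n$), $[e_3,e_h]=0$ ($2\le h\le n$); then $C^k\mathfrak g=\langle e_2,\dots,e_{n-k+1}\rangle$. For non-model filiform $\mathfrak g$, $z_1=\min\{k\ge4:[e_k,e_n]\ne0\}$, $z_2=\min\{k\ge4:[e_k,e_{k+1}]\ne0\}$ (in any adapted basis) are invariants; $(z_1,z_2,n)$ is the associated triple. $P_h(u)$ is the $h$-th coordinate of $u$ in $\{e_h\}$. General law (known result) for triple $(z_1,z_2,n)$: there are complex numbers $\alpha_i$ ($1\le i\le z_2-z_1+1$), $\gamma_j$ ($1\le j\le n-z_2-1$), $\beta_{k\ell}$ ($2\le\ell\le n-z_2$, $1\le k<z_2-z_1+\ell$), the parameters, with $[e_1,e_h]=e_{h-1}$; $[e_{z_1+i},e_{z_2+1}]=\alpha_1e_{i+2}+\dots+\alpha_{i+1}e_2$ ($0\le i\le z_2-z_1$); $[e_{z_1},e_{z_2+j}]=\alpha_1e_{j+1}+\gamma_1e_j+\dots+\gamma_{j-1}e_2$ ($2\le j\le n-z_2$); $[e_{z_1+k},e_{z_2+\ell}]=\sum_{h=2}^{k+\ell}P_h([e_{z_1+k-1},e_{z_2+\ell}]+[e_{z_1+k},e_{z_2+\ell-1}])e_{h+1}+\beta_{k\ell}e_2$;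 all other brackets $[e_a,e_b]$, $2\le a<b$, zero. For $(5,6,9)$ the parameters are $\alpha_1,\alpha_2,\gamma_1,\gamma_2,\beta_{12},\beta_{22},\beta_{13},\beta_{23},\beta_{33}$. Hilbert polynomial: $\mathrm{HP}_{\mathfrak g}(t,s)=\sum_{k,\ell\ge1}\dim[C^k\mathfrak g,C^\ell\mathfrak g]\,t^ks^\ell$; $\mathrm{HP}^{(0)}_{\mathfrak g}=(n-2)ts+\sum_{2\le k\le n-2}(n-k-1)(t^ks+ts^k)$. *)

theory Defs
  imports Complex_Main
begin

text \<open>Vectors of an n-dimensional complex vector space are coordinate functions
  nat => complex supported on 1..n; e h is the h-th basis vector.\<close>

type_synonym cvec = "nat \<Rightarrow> complex"

definition V :: "nat \<Rightarrow> cvec set" where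
  "V n = {u. \<forall>h. h \<notin> {1..n} \<longrightarrow> u h = 0}"

definition e :: "nat \<Rightarrow> cvec" where
  "e h = (\<lambda>i. if i = h then 1 else 0)"

definition vadd :: "cvec \<Rightarrow> cvec \<Rightarrow> cvec" where
  "vadd u v = (\<lambda>h. u h + v h)"

definition smul :: "complex \<Rightarrow> cvec \<Rightarrow> cvec" where
  "smul c u = (\<lambda>h. c * u h)"

definition zerov :: cvec where
  "zerov = (\<lambda>h. 0)"

definition cspan :: "cvec set \<Rightarrow> cvec set" where
  "cspan S = {v. \<exists>F c. finite F \<and> F \<subseteq> S \<and> v = (\<lambda>h. \<Sum>u\<in>F. c u * u h)}"

definition cdim :: "cvec set \<Rightarrow> nat" where
  "cdim W = (LEAST k. \<exists>F. finite F \<and> card F = k \<and> F \<subseteq> W \<and> cspan F = W)"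

definition lie_alg :: "nat \<Rightarrow> (cvec \<Rightarrow> cvec \<Rightarrow> cvec) \<Rightarrow> bool" where
  "lie_alg n B \<longleftrightarrow>
     (\<forall>u\<in>V n. \<forall>v\<in>V n. B u v \<in> V n) \<and>
     (\<forall>u\<in>V n. \<forall>v\<in>V n. \<forall>w\<in>V n. B (vadd u v) w = vadd (B u w) (B v w)) \<and>
     (\<forall>u\<in>V n. \<forall>v\<in>V n. \<forall>w\<in>V n. B w (vadd u v) = vadd (B w u) (B w v)) \<and>
     (\<forall>c. \<forall>u\<in>V n. \<forall>v\<in>V n. B (smul c u) v = smul c (B u v) \<and> B u (smul c v) = smul c (B u v)) \<and>
     (\<forall>u\<in>V n. B u u = zerov) \<and>
     (\<forall>u\<in>V n. \<forall>v\<in>V n. \<forall>w\<in>V n.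
        vadd (vadd (B u (B v w)) (B v (B w u))) (B w (B u v)) = zerov)"

definition brsp :: "(cvec \<Rightarrow> cvec \<Rightarrow> cvec) \<Rightarrow> cvec set \<Rightarrow> cvec set \<Rightarrow> cvec set" where
  "brsp B A A' = cspan {B u v | u v. u \<in> A \<and> v \<in> A'}"

fun lcs :: "nat \<Rightarrow> (cvec \<Rightarrow> cvec \<Rightarrow> cvec) \<Rightarrow> nat \<Rightarrow> cvec set" where
  "lcs n B 0 = V n"
| "lcs n B (Suc 0) = V n"
| "lcs n B (Suc (Suc k)) = brsp B (lcs n B (Suc k)) (V n)"

definition filiform :: "nat \<Rightarrow> (cvec \<Rightarrow> cvec \<Rightarrow> cvec) \<Rightarrow> bool" where
  "filiform n B \<longleftrightarrow> n \<ge> 2 \<and> (\<forall>k. 2 \<le> k \<and> k \<le> n \<longrightarrow> cdim (lcs n B k) = n - k)"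

definition adapted :: "nat \<Rightarrow> (cvec \<Rightarrow> cvec \<Rightarrow> cvec) \<Rightarrow> bool" where
  "adapted n B \<longleftrightarrow>
     (\<forall>h. 3 \<le> h \<and> h \<le> n \<longrightarrow> B (e 1) (e h) = e (h - 1)) \<and>
     (\<forall>h. 1 \<le> h \<and> h \<le> n \<longrightarrow> B (e 2) (e h) = zerov) \<and>
     (\<forall>h. 2 \<le> h \<and> h \<le> n \<longrightarrow> B (e 3) (e h) = zerov)"

text \<open>z is the invariant z_1 (resp. z_2): the minimum of the given set (in particular it exists).\<close>
definition is_z1 :: "nat \<Rightarrow> (cvec \<Rightarrow> cvec \<Rightarrow> cvec) \<Rightarrow> nat \<Rightarrow> bool" where
  "is_z1 n B z \<longleftrightarrow> 4 \<le> z \<and> B (e z) (e n) \<noteq> zerov \<and>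
     (\<forall>k. 4 \<le> k \<and> k < z \<longrightarrow> B (e k) (e n) = zerov)"

definition is_z2 :: "nat \<Rightarrow> (cvec \<Rightarrow> cvec \<Rightarrow> cvec) \<Rightarrow> nat \<Rightarrow> bool" where
  "is_z2 n B z \<longleftrightarrow> 4 \<le> z \<and> B (e z) (e (z + 1)) \<noteq> zerov \<and>
     (\<forall>k. 4 \<le> k \<and> k < z \<longrightarrow> B (e k) (e (k + 1)) = zerov)"

text \<open>General law for triple (z1,z2,n): lawc z1 z2 n al ga be a b h is the h-th
  coordinate of [e_a, e_b] for 2 <= a < b <= n (0 otherwise).
  al i = alpha_i, ga j = gamma_j, be k l = beta_{kl}.\<close>
function lawc :: "nat \<Rightarrow> nat \<Rightarrow> nat \<Rightarrow> (nat \<Rightarrow> complex) \<Rightarrow> (nat \<Rightarrow> complex)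
    \<Rightarrow> (nat \<Rightarrow> nat \<Rightarrow> complex) \<Rightarrow> nat \<Rightarrow> nat \<Rightarrow> nat \<Rightarrow> complex" where
  "lawc z1 z2 n al ga be a b h =
    (if 2 \<le> a \<and> a < b \<and> b \<le> n then
       (if z1 \<le> a \<and> a \<le> z2 \<and> b = z2 + 1 then
          (if 2 \<le> h \<and> h \<le> (a - z1) + 2 then al ((a - z1) + 3 - h) else 0)
        else if a = z1 \<and> z2 + 2 \<le> b then
          (if h = (b - z2) + 1 then al 1
           else if 2 \<le> h \<and> h \<le> b - z2 then ga ((b - z2) + 1 - h) else 0)
        else if z1 < a \<and> z2 + 2 \<le> b then
          (if 3 \<le> h \<and> h \<le> (a - z1) + (b - z2) + 1 then
              lawc z1 z2 n al ga be (a - 1) b (h - 1) + lawc z1 z2 n al ga be a (b - 1) (h - 1)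
           else if h = 2 then be (a - z1) (b - z2) else 0)
        else 0)
     else 0)"
  by pat_completeness auto
termination
  by (relation "measure (\<lambda>(z1,z2,n,al,ga,be,a,b,h). a + b)") auto

definition lawct :: "nat \<Rightarrow> nat \<Rightarrow> nat \<Rightarrow> (nat \<Rightarrow> complex) \<Rightarrow> (nat \<Rightarrow> complex)
    \<Rightarrow> (nat \<Rightarrow> nat \<Rightarrow> complex) \<Rightarrow> nat \<Rightarrow> nat \<Rightarrow> nat \<Rightarrow> complex" where
  "lawct z1 z2 n al ga be a b h =
    (if a = 1 \<and> 3 \<le> b then (if h = b - 1 then 1 else 0)
     else if b = 1 \<and> 3 \<le> a then (if h = a - 1 then -1 else 0)
     else if 2 \<le> a \<and> a < b then lawc z1 z2 n al ga be a b h
     else if 2 \<le> b \<and> b < a then - lawc z1 z2 n al ga be b a h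
     else 0)"

definition brc :: "nat \<Rightarrow> (nat \<Rightarrow> nat \<Rightarrow> nat \<Rightarrow> complex) \<Rightarrow> cvec \<Rightarrow> cvec \<Rightarrow> cvec" where
  "brc n ct u v = (\<lambda>h. if h \<in> {1..n} then (\<Sum>a=1..n. \<Sum>b=1..n. u a * v b * ct a b h) else 0)"

text \<open>Bivariate integer polynomials in t,s as coefficient functions (k,l) |-> coeff of t^k s^l.\<close>
type_synonym bipoly = "nat \<times> nat \<Rightarrow> int"

definition bimono :: "nat \<Rightarrow> nat \<Rightarrow> bipoly" where
  "bimono k l = (\<lambda>p. if p = (k, l) then 1 else 0)"

definition HP :: "nat \<Rightarrow> (cvec \<Rightarrow> cvec \<Rightarrow> cvec) \<Rightarrow> bipoly" where
  "HP n B = (\<lambda>(k, l). if 1 \<le> k \<and> 1 \<le> l then int (cdim (brsp B (lcs n B k) (lcs n B l))) else 0)"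

definition HP0 :: "nat \<Rightarrow> bipoly" where
  "HP0 n = (\<lambda>p. (int n - 2) * bimono 1 1 p
      + (\<Sum>k\<in>{2..n-2}. (int n - int k - 1) * (bimono k 1 p + bimono 1 k p)))"

end

theory Submission
  imports Defs "HOL-Library.Function_Algebras"
begin

text \<open>
  Two instances of the Jacobi identity, read off at the coordinate \<open>e\<^sub>2\<close>, give
  \<open>5\<alpha>\<^sub>1\<^sup>2 = 0\<close> (for \<open>e\<^sub>5, e\<^sub>8, e\<^sub>9\<close>) and
  \<open>3\<gamma>\<^sub>1\<^sup>2 - \<alpha>\<^sub>2\<gamma>\<^sub>1 - 2\<alpha>\<^sub>2\<^sup>2 = 0\<close> (for \<open>e\<^sub>7, e\<^sub>8, e\<^sub>9\<close>), while
  \<open>z\<^sub>2 = 6\<close> means \<open>[e\<^sub>6, e\<^sub>7] = \<alpha>\<^sub>2 e\<^sub>2 \<noteq> 0\<close>; together these force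
  \<open>\<gamma>\<^sub>1 \<noteq> 0\<close> and \<open>\<gamma>\<^sub>1 + \<alpha>\<^sub>2 \<noteq> 0\<close>.

  Since \<open>[e\<^sub>1, e\<^sub>h] = e\<^bsub>h-1\<^esub>\<close>, the lower central series is
  \<open>C\<^sup>k\<frak>g = \<langle>e\<^sub>2, \<dots>, e\<^bsub>10-k\<^esub>\<rangle>\<close>. Once \<open>\<alpha>\<^sub>1 = 0\<close>, a bracket
  \<open>[e\<^sub>i, e\<^sub>j]\<close> with \<open>2 \<le> i \<noteq> j \<le> 8\<close> lies in \<open>\<langle>e\<^sub>2, \<dots>, e\<^bsub>i+j-11\<^esub>\<rangle>\<close>,
  and its coefficient at \<open>e\<^bsub>i+j-11\<^esub>\<close> is one of \<open>\<gamma>\<^sub>1, \<alpha>\<^sub>2, \<gamma>\<^sub>1 + \<alpha>\<^sub>2\<close>, hence nonzero.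
  These brackets are therefore triangular, and \<open>[C\<^sup>k\<frak>g, C\<^sup>l\<frak>g]\<close> is spanned by
  \<open>e\<^sub>2, \<dots>, e\<^bsub>m-11\<^esub>\<close>, where \<open>m\<close> is the largest sum \<open>i + j\<close> of distinct
  \<open>i \<le> 10 - k\<close>, \<open>j \<le> 10 - l\<close>. Reading off dimensions gives the Hilbert polynomial.
\<close>

section \<open>Coordinate subspaces\<close>

lemma sum_apply: "(\<Sum>x\<in>A. f x) (h::'b) = (\<Sum>x\<in>A. f x h)"
  by (induct A rule: infinite_finite_induct) auto

interpretation cv: vector_space smul
  by unfold_locales (auto simp: smul_def plus_fun_def fun_eq_iff algebra_simps)

lemma cspan_eq_span: "cspan S = cv.span S"
  unfolding cspan_def cv.span_explicit
  by (auto simp: smul_def sum_apply fun_eq_iff)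

definition supported_on :: "nat set \<Rightarrow> cvec set" where
  "supported_on I = {v. \<forall>h. h \<notin> I \<longrightarrow> v h = 0}"

lemma subspace_supported_on: "cv.subspace (supported_on I)"
  unfolding cv.subspace_def supported_on_def by (auto simp: smul_def)

lemma e_in_supported_on: "i \<in> I \<Longrightarrow> e i \<in> supported_on I"
  by (auto simp: supported_on_def e_def)

lemma supported_on_empty: "supported_on {} = {zerov}"
  by (auto simp: supported_on_def zerov_def fun_eq_iff)

lemma V_eq_supported_on: "V n = supported_on {1..n}"
  by (simp add: V_def supported_on_def)

lemma supported_on_eq_span:
  assumes "finite I"
  shows "supported_on I = cv.span (e ` I)"
proof
  show "cv.span (e ` I) \<subseteq> supported_on I"
    by (rule cv.span_minimal) (auto intro: e_in_supported_on subspace_supported_on)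
  show "supported_on I \<subseteq> cv.span (e ` I)"
  proof
    fix v assume v: "v \<in> supported_on I"
    have "v = (\<Sum>i\<in>I. smul (v i) (e i))"
      using v assms by (auto simp: fun_eq_iff sum_apply smul_def e_def supported_on_def if_distrib cong: if_cong)
    also have "\<dots> \<in> cv.span (e ` I)"
      by (intro cv.span_sum cv.span_scale cv.span_base) auto
    finally show "v \<in> cv.span (e ` I)" .
  qed
qed

lemma supported_on_eq_cspan: "finite I \<Longrightarrow> supported_on I = cspan (e ` I)"
  by (simp add: supported_on_eq_span cspan_eq_span)

lemma cspan_empty: "cspan {} = {zerov}"
  using supported_on_eq_cspan[of "{}"] by (simp add: supported_on_empty)

lemma inj_e: "inj e"
  by (rule injI) (metis e_def zero_neq_one)

lemma independent_e: "cv.independent (e ` I)"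
  unfolding cv.independent_explicit_module
proof (intro allI impI)
  fix t u v
  assume t: "finite t" "t \<subseteq> e ` I" and s: "(\<Sum>v\<in>t. smul (u v) v) = 0" and v: "v \<in> t"
  obtain j where j: "v = e j" using v t by auto
  have "0 = (\<Sum>w\<in>t. smul (u w) w) j" using s by simp
  also have "\<dots> = (\<Sum>w\<in>t. if w = v then u w else 0)"
    unfolding sum_apply
  proof (rule sum.cong)
    fix w assume "w \<in> t"
    then obtain i where i: "w = e i" using t by auto
    have "w = v \<longleftrightarrow> i = j" using i j inj_e by (auto dest: injD)
    then show "smul (u w) w j = (if w = v then u w else 0)"
      using i by (auto simp: smul_def e_def)
  qed simp
  also have "\<dots> = u v" using t v by simp
  finally show "u v = 0" ..
qed

lemma cdim_supported_on:
  assumes "finite I"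
  shows "cdim (supported_on I) = card I"
  unfolding cdim_def
proof (rule Least_equality)
  have card_eI: "card (e ` I) = card I"
    using inj_e by (simp add: card_image inj_on_subset)
  then show "\<exists>F. finite F \<and> card F = card I \<and> F \<subseteq> supported_on I \<and> cspan F = supported_on I"
    using assms by (intro exI[of _ "e ` I"]) (auto simp: supported_on_eq_cspan[symmetric] e_in_supported_on)
  fix k assume "\<exists>F. finite F \<and> card F = k \<and> F \<subseteq> supported_on I \<and> cspan F = supported_on I"
  then obtain F where F: "finite F" "card F = k" "cv.span F = supported_on I"
    by (auto simp: cspan_eq_span)
  have "card I = cv.dim (supported_on I)"
    using cv.dim_span_eq_card_independent[OF independent_e, of I] card_eI
    by (simp add: supported_on_eq_span[OF assms])
  also have "\<dots> \<le> card F"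
    using F by (intro cv.dim_le_card) auto
  finally show "card I \<le> k" using F by simp
qed

lemma cdim_supported_on_interval: "cdim (supported_on {2..m}) = m - 1"
  by (simp add: cdim_supported_on)

section \<open>Brackets given by structure constants\<close>

lemma brc_add_left: "brc n c (u + v) w = brc n c u w + brc n c v w"
  by (simp add: brc_def fun_eq_iff algebra_simps sum.distrib)

lemma brc_add_right: "brc n c w (u + v) = brc n c w u + brc n c w v"
  by (simp add: brc_def fun_eq_iff algebra_simps sum.distrib)

lemma brc_smul_left: "brc n c (smul k u) w = smul k (brc n c u w)"
  by (simp add: brc_def smul_def fun_eq_iff algebra_simps sum_distrib_left)

lemma brc_smul_right: "brc n c w (smul k u) = smul k (brc n c w u)"
  by (simp add: brc_def smul_def fun_eq_iff algebra_simps sum_distrib_left)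

lemma brc_zero_left: "brc n c 0 w = 0"
  by (simp add: brc_def fun_eq_iff)

lemma brc_zero_right: "brc n c w 0 = 0"
  by (simp add: brc_def fun_eq_iff)

lemma sum_if_const: "(\<Sum>x\<in>S. if P then f x else 0) = (if P then (\<Sum>x\<in>S. f x) else 0)"
  by simp

lemma brc_e_e:
  "a \<in> {1..n} \<Longrightarrow> b \<in> {1..n} \<Longrightarrow> brc n c (e a) (e b) = (\<lambda>h. if h \<in> {1..n} then c a b h else 0)"
  by (simp add: brc_def e_def fun_eq_iff if_distrib[of "\<lambda>x. x * _"] sum_if_const cong: if_cong)

lemma brc_e_left:
  "a \<in> {1..n} \<Longrightarrow> brc n c (e a) w = (\<lambda>h. if h \<in> {1..n} then (\<Sum>b=1..n. w b * c a b h) else 0)"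
  by (simp add: brc_def e_def fun_eq_iff if_distrib[of "\<lambda>x. x * _"] sum_if_const cong: if_cong)

text \<open>The lower bound is \<open>Suc 0\<close> because that is the simp normal form of \<open>1 :: nat\<close>.\<close>
lemma sum_Suc_0_to_9:
  fixes f :: "nat \<Rightarrow> 'a::comm_monoid_add"
  shows "(\<Sum>b=Suc 0..9. f b) = f 1 + f 2 + f 3 + f 4 + f 5 + f 6 + f 7 + f 8 + f 9"
  by (simp add: numeral_eq_Suc add_ac)

lemma brc_swap:
  assumes "\<And>a b h. c b a h = - c a b h"
  shows "brc n c v u = smul (-1) (brc n c u v)"
proof -
  have "u b * v a * c b a h = - (v a * u b * c a b h)" for a b h
    using assms[of a b h] by simp
  then have "(\<Sum>a=1..n. \<Sum>b=1..n. v a * u b * c a b h) = - (\<Sum>b=1..n. \<Sum>a=1..n. u b * v a * c b a h)" for h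
    by (subst sum.swap) (simp add: sum_negf)
  then show ?thesis
    by (simp add: brc_def smul_def fun_eq_iff)
qed

lemma brsp_span:
  "brsp (brc n c) (cv.span S) (cv.span T) = cv.span {brc n c u v | u v. u \<in> S \<and> v \<in> T}"
  (is "_ = cv.span ?G")
proof -
  have right: "cv.span T \<subseteq> {v. brc n c u v \<in> cv.span ?G}" if "u \<in> S" for u
    by (rule cv.span_minimal, use that in \<open>blast intro: cv.span_base\<close>)
      (auto simp: brc_zero_right brc_add_right brc_smul_right intro!: cv.subspaceI cv.span_zero cv.span_add cv.span_scale)
  have "cv.span S \<subseteq> {u. \<forall>v\<in>cv.span T. brc n c u v \<in> cv.span ?G}"
    by (rule cv.span_minimal, use right in blast)
      (auto simp: brc_zero_left brc_add_left brc_smul_left intro!: cv.subspaceI cv.span_zero cv.span_add cv.span_scale)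
  then have "brsp (brc n c) (cv.span S) (cv.span T) \<subseteq> cv.span ?G"
    unfolding brsp_def cspan_eq_span by (intro cv.span_minimal) auto
  moreover have "cv.span ?G \<subseteq> brsp (brc n c) (cv.span S) (cv.span T)"
    unfolding brsp_def cspan_eq_span by (intro cv.span_mono) (auto intro: cv.span_base)
  ultimately show ?thesis by blast
qed

lemma brsp_swap_subset:
  assumes "\<And>a b h. c b a h = - c a b h"
  shows "brsp (brc n c) A A' \<subseteq> brsp (brc n c) A' A"
  unfolding brsp_def cspan_eq_span
proof (rule cv.span_minimal)
  show "{brc n c u v |u v. u \<in> A \<and> v \<in> A'} \<subseteq> cv.span {brc n c u v |u v. u \<in> A' \<and> v \<in> A}"
  proof clarify
    fix u v assume "u \<in> A" "v \<in> A'"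
    then have "brc n c v u \<in> cv.span {brc n c u v |u v. u \<in> A' \<and> v \<in> A}"
      by (blast intro: cv.span_base)
    then show "brc n c u v \<in> cv.span {brc n c u v |u v. u \<in> A' \<and> v \<in> A}"
      unfolding brc_swap[of c n u v, OF assms] by (rule cv.span_scale)
  qed
qed simp

lemma brsp_swap:
  assumes "\<And>a b h. c b a h = - c a b h"
  shows "brsp (brc n c) A A' = brsp (brc n c) A' A"
  by (intro equalityI brsp_swap_subset assms)

lemma supported_on_interval_subset:
  assumes S: "cv.subspace S"
    and gen: "\<And>t. 2 \<le> t \<Longrightarrow> t \<le> m \<Longrightarrow> \<exists>g\<in>S. g \<in> supported_on {2..t} \<and> g t \<noteq> 0"
  shows "supported_on {2..m} \<subseteq> S"
  using gen
proof (induction m)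
  case 0
  then show ?case using S by (simp add: supported_on_empty zerov_def cv.subspace_0 zero_fun_def[symmetric])
next
  case (Suc m)
  show ?case
  proof (cases "Suc m < 2")
    case True
    then show ?thesis using S by (simp add: supported_on_empty zerov_def cv.subspace_0 zero_fun_def[symmetric])
  next
    case False
    have IH: "supported_on {2..m} \<subseteq> S" using Suc by auto
    obtain g where g: "g \<in> S" "g \<in> supported_on {2..Suc m}" "g (Suc m) \<noteq> 0"
      using False Suc.prems[of "Suc m"] by auto
    define w where "w = g(Suc m := 0)"
    have "w \<in> S" using g(2) IH by (auto simp: supported_on_def w_def)
    moreover have "e (Suc m) = smul (1 / g (Suc m)) (g - w)"
      using g(3) by (auto simp: fun_eq_iff e_def smul_def w_def)
    ultimately have eS: "e (Suc m) \<in> S"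
      using g(1) by (simp add: S cv.subspace_diff cv.subspace_scale)
    show ?thesis
    proof
      fix v assume v: "v \<in> supported_on {2..Suc m}"
      have "v(Suc m := 0) \<in> S" using v IH by (auto simp: supported_on_def)
      moreover have "v = smul (v (Suc m)) (e (Suc m)) + v(Suc m := 0)"
        by (auto simp: fun_eq_iff e_def smul_def)
      ultimately show "v \<in> S" using eS S by (metis cv.subspace_add cv.subspace_scale)
    qed
  qed
qed

lemma brsp_brc_eq_supported_on_interval:
  assumes I: "I \<subseteq> {1..n}" "finite I" and J: "J \<subseteq> {1..n}" "finite J" and "m \<le> n"
    and upper: "\<And>i j h. i \<in> I \<Longrightarrow> j \<in> J \<Longrightarrow> c i j h \<noteq> 0 \<Longrightarrow> 2 \<le> h \<and> h \<le> m"
    and lower: "\<And>t. 2 \<le> t \<Longrightarrow> t \<le> m \<Longrightarrow>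
      \<exists>i\<in>I. \<exists>j\<in>J. c i j t \<noteq> 0 \<and> (\<forall>h. c i j h \<noteq> 0 \<longrightarrow> h \<le> t)"
  shows "brsp (brc n c) (supported_on I) (supported_on J) = supported_on {2..m}"
proof -
  let ?G = "{brc n c u v | u v. u \<in> e ` I \<and> v \<in> e ` J}"
  have bracket_e: "brc n c (e i) (e j) = (\<lambda>h. if h \<in> {1..n} then c i j h else 0)"
    if "i \<in> I" "j \<in> J" for i j
    using that I J by (intro brc_e_e) auto
  have bracket_supp: "brc n c (e i) (e j) \<in> supported_on {2..t}"
    if "i \<in> I" "j \<in> J" "\<And>h. c i j h \<noteq> 0 \<Longrightarrow> h \<le> t" for i j t
    using that upper[OF that(1,2)] by (auto simp: bracket_e supported_on_def)
  have "brsp (brc n c) (supported_on I) (supported_on J) = cv.span ?G"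
    unfolding supported_on_eq_span[OF I(2)] supported_on_eq_span[OF J(2)] by (rule brsp_span)
  moreover have "cv.span ?G \<subseteq> supported_on {2..m}"
    using upper by (intro cv.span_minimal subspace_supported_on) (auto intro: bracket_supp)
  moreover have "supported_on {2..m} \<subseteq> cv.span ?G"
  proof (rule supported_on_interval_subset)
    fix t assume t: "2 \<le> t" "t \<le> m"
    then obtain i j where ij: "i \<in> I" "j \<in> J" "c i j t \<noteq> 0" "\<forall>h. c i j h \<noteq> 0 \<longrightarrow> h \<le> t"
      using lower by blast
    have "brc n c (e i) (e j) \<in> cv.span ?G"
      using ij by (intro cv.span_base) blast
    moreover have "brc n c (e i) (e j) \<in> supported_on {2..t}"
      using ij by (intro bracket_supp) auto
    moreover have "brc n c (e i) (e j) t \<noteq> 0"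
      using ij t \<open>m \<le> n\<close> by (simp add: bracket_e)
    ultimately show "\<exists>g\<in>cv.span ?G. g \<in> supported_on {2..t} \<and> g t \<noteq> 0" by blast
  qed simp
  ultimately show ?thesis by blast
qed

section \<open>The Jacobi identity and the general law\<close>

lemma lie_alg_jacobi_e:
  assumes "lie_alg n B" "u \<in> {1..n}" "v \<in> {1..n}" "w \<in> {1..n}"
  shows "B (e u) (B (e v) (e w)) h + B (e v) (B (e w) (e u)) h + B (e w) (B (e u) (e v)) h = 0"
proof -
  have "e i \<in> V n" if "i \<in> {1..n}" for i
    using that by (auto simp: V_def e_def)
  with assms have "vadd (vadd (B (e u) (B (e v) (e w))) (B (e v) (B (e w) (e u)))) (B (e w) (B (e u) (e v))) = zerov"
    unfolding lie_alg_def by blast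
  then show ?thesis by (simp add: vadd_def zerov_def fun_eq_iff)
qed

declare lawc.simps[simp del]

lemma lawc_support:
  "lawc z1 z2 n al ga be a b h \<noteq> 0 \<Longrightarrow> 2 \<le> h \<and> h + z1 + z2 \<le> a + b + 1"
  by (subst (asm) lawc.simps) (auto split: if_splits)

lemma lawct_antisym: "lawct z1 z2 n al ga be b a h = - lawct z1 z2 n al ga be a b h"
  unfolding lawct_def by (simp split: if_splits)

lemma lawct_one_left: "lawct z1 z2 n al ga be 1 b h = (if 3 \<le> b \<and> h = b - 1 then 1 else 0)"
  by (auto simp: lawct_def)

lemma lawct_diag: "2 \<le> a \<Longrightarrow> lawct z1 z2 n al ga be a a h = 0"
  by (simp add: lawct_def)

lemma lawct_support:
  assumes "2 \<le> a" "2 \<le> b" "lawct z1 z2 n al ga be a b h \<noteq> 0"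
  shows "2 \<le> h \<and> h + z1 + z2 \<le> a + b + 1"
  using assms lawc_support[of z1 z2 n al ga be a b h] lawc_support[of z1 z2 n al ga be b a h]
  by (auto simp: lawct_def split: if_splits)

definition max_distinct_sum :: "nat \<Rightarrow> nat \<Rightarrow> nat" where
  "max_distinct_sum M N = (if M = N then 2 * M - 1 else M + N)"

lemma distinct_sum_le: "i \<le> M \<Longrightarrow> j \<le> N \<Longrightarrow> i \<noteq> j \<Longrightarrow> i + j \<le> max_distinct_sum M N"
  unfolding max_distinct_sum_def by (cases "i < j") auto

lemma distinct_sum_attained:
  assumes "s \<le> max_distinct_sum M N" "M + 2 \<le> s" "N + 2 \<le> s"
  shows "\<exists>i j. 2 \<le> i \<and> i \<le> M \<and> 2 \<le> j \<and> j \<le> N \<and> i \<noteq> j \<and> i + j = s"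
proof (cases "s = 2 * M")
  case True
  have "M \<noteq> N" using assms(1,3) True by (auto simp: max_distinct_sum_def)
  then have "M + 1 \<le> N" using assms(1) True by (simp add: max_distinct_sum_def)
  with True assms(3) show ?thesis by (intro exI[of _ "M - 1"] exI[of _ "M + 1"]) linarith
next
  case False
  with assms show ?thesis
    by (intro exI[of _ M] exI[of _ "s - M"]) (auto simp: max_distinct_sum_def split: if_splits)
qed

lemma max_distinct_sum_hilbert_table:
  assumes "2 \<le> k" "2 \<le> l"
  shows "int (max_distinct_sum (10 - k) (10 - l) - 12) =
          3 * (bimono 2 2 (k,l) + bimono 2 3 (k,l) + bimono 3 2 (k,l)) + 2 * (bimono 2 4 (k,l) + bimono 4 2 (k,l))
          + (bimono 2 5 (k,l) + bimono 5 2 (k,l)) + (bimono 3 3 (k,l) + bimono 3 4 (k,l) + bimono 4 3 (k,l))"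
proof (cases "k + l \<le> 7")
  case True
  then have "k \<in> {2, 3, 4, 5}" "l \<in> {2, 3, 4, 5}" using assms by auto
  then show ?thesis using True
    by (elim insertE emptyE) (simp_all add: max_distinct_sum_def bimono_def)
next
  case False
  then have "max_distinct_sum (10 - k) (10 - l) \<le> 12"
    using assms unfolding max_distinct_sum_def by (cases "k = l") auto
  then show ?thesis using False by (simp add: bimono_def)
qed

lemma HP0_apply:
  "HP0 n (k, l) = (if k = 1 \<and> l = 1 then int n - 2
    else if k = 1 \<and> 2 \<le> l \<and> l \<le> n - 2 then int n - int l - 1
    else if l = 1 \<and> 2 \<le> k \<and> k \<le> n - 2 then int n - int k - 1 else 0)"
proof -
  have "(\<Sum>x\<in>{2..n-2}. (int n - int x - 1) * (bimono x 1 (k, l) + bimono 1 x (k, l)))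
      = (\<Sum>x\<in>{2..n-2}. if x = k \<and> l = 1 then int n - int x - 1 else 0)
      + (\<Sum>x\<in>{2..n-2}. if x = l \<and> k = 1 then int n - int x - 1 else 0)"
    unfolding sum.distrib[symmetric] by (rule sum.cong) (auto simp: bimono_def)
  also have "\<dots> = (if l = 1 \<and> 2 \<le> k \<and> k \<le> n - 2 then int n - int k - 1 else 0)
      + (if k = 1 \<and> 2 \<le> l \<and> l \<le> n - 2 then int n - int l - 1 else 0)"
    by (cases "k = 1"; cases "l = 1") (simp_all add: sum.delta)
  finally show ?thesis by (auto simp: HP0_def bimono_def)
qed

lemma quadratic_relation_nondegenerate:
  fixes a g :: "'a::{idom, ring_char_0}"
  assumes "(2 * a + 3 * g) * (a - g) = 0" "a \<noteq> 0"
  shows "g \<noteq> 0" "g + a \<noteq> 0"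
proof -
  show "g \<noteq> 0"
  proof
    assume "g = 0"
    with assms show False by simp
  qed
  then show "g + a \<noteq> 0"
    using assms(1) by (auto simp: algebra_simps add_eq_0_iff2 dest: sym)
qed

section \<open>The law of type (5, 6, 9)\<close>

context
  fixes al ga :: "nat \<Rightarrow> complex" and be :: "nat \<Rightarrow> nat \<Rightarrow> complex"
begin

abbreviation "l569 \<equiv> lawc 5 6 9 al ga be"
abbreviation "c569 \<equiv> lawct 5 6 9 al ga be"
abbreviation "B569 \<equiv> brc 9 c569"

lemma l569_zero: "\<not> (5 \<le> a \<and> 7 \<le> b \<and> a < b \<and> b \<le> 9) \<Longrightarrow> l569 a b h = 0"
  by (subst lawc.simps) auto

lemma l569_5_7: "l569 5 7 h = (if h = 2 then al 1 else 0)"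
  by (subst lawc.simps) auto
lemma l569_5_8: "l569 5 8 h = (if h = 2 then ga 1 else if h = 3 then al 1 else 0)"
  by (subst lawc.simps) auto
lemma l569_5_9: "l569 5 9 h = (if h = 2 then ga 2 else if h = 3 then ga 1 else if h = 4 then al 1 else 0)"
  by (subst lawc.simps) auto
lemma l569_6_7: "l569 6 7 h = (if h = 2 then al 2 else if h = 3 then al 1 else 0)"
  by (subst lawc.simps) auto
lemma l569_6_8:
  "l569 6 8 h = (if h = 2 then be 1 2 else if h = 3 then ga 1 + al 2 else if h = 4 then 2 * al 1 else 0)"
  by (subst lawc.simps) (auto simp: l569_5_8 l569_6_7)
lemma l569_6_9:
  "l569 6 9 h = (if h = 2 then be 1 3 else if h = 3 then ga 2 + be 1 2
    else if h = 4 then 2 * ga 1 + al 2 else if h = 5 then 3 * al 1 else 0)"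
  by (subst lawc.simps) (auto simp: l569_5_9 l569_6_8)
lemma l569_7_8:
  "l569 7 8 h = (if h = 2 then be 2 2 else if h = 3 then be 1 2 else if h = 4 then ga 1 + al 2
    else if h = 5 then 2 * al 1 else 0)"
  by (subst lawc.simps) (auto simp: l569_6_8 l569_zero)
lemma l569_7_9:
  "l569 7 9 h = (if h = 2 then be 2 3 else if h = 3 then be 1 3 + be 2 2
    else if h = 4 then ga 2 + 2 * be 1 2 else if h = 5 then 3 * ga 1 + 2 * al 2
    else if h = 6 then 5 * al 1 else 0)"
  by (subst lawc.simps) (auto simp: l569_6_9 l569_7_8)
lemma l569_8_9:
  "l569 8 9 h = (if h = 2 then be 3 3 else if h = 3 then be 2 3 else if h = 4 then be 1 3 + be 2 2
    else if h = 5 then ga 2 + 2 * be 1 2 else if h = 6 then 3 * ga 1 + 2 * al 2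
    else if h = 7 then 5 * al 1 else 0)"
  by (subst lawc.simps) (auto simp: l569_7_9 l569_zero)

lemmas l569_table = l569_5_7 l569_5_8 l569_5_9 l569_6_7 l569_6_8 l569_6_9 l569_7_8 l569_7_9 l569_8_9
  l569_zero

lemma alpha1_eq_0:
  assumes "lie_alg 9 B569"
  shows "al 1 = 0"
proof -
  have "B569 (e 5) (B569 (e 8) (e 9)) 2 + B569 (e 8) (B569 (e 9) (e 5)) 2
      + B569 (e 9) (B569 (e 5) (e 8)) 2 = 0"
    using assms by (rule lie_alg_jacobi_e) auto
  then have "5 * al 1 * al 1 = 0"
    by (simp add: brc_e_left del: One_nat_def) (simp add: e_def sum_Suc_0_to_9 lawct_def l569_table algebra_simps)
  then show ?thesis by simp
qed

lemma alpha_gamma_relation: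
  assumes "lie_alg 9 B569"
  shows "(2 * al 2 + 3 * ga 1) * (al 2 - ga 1) = 0"
proof -
  have "B569 (e 7) (B569 (e 8) (e 9)) 2 + B569 (e 8) (B569 (e 9) (e 7)) 2
      + B569 (e 9) (B569 (e 7) (e 8)) 2 = 0"
    using assms by (rule lie_alg_jacobi_e) auto
  then have "3 * ga 1 * ga 1 - al 2 * ga 1 - 2 * al 2 * al 2 = 0"
    using alpha1_eq_0[OF assms]
    by (simp add: brc_e_left del: One_nat_def) (simp add: e_def sum_Suc_0_to_9 lawct_def l569_table algebra_simps)
  then show ?thesis by (simp add: algebra_simps)
qed

lemma alpha2_neq_0:
  assumes "al 1 = 0" "B569 (e 6) (e 7) \<noteq> zerov"
  shows "al 2 \<noteq> 0"
proof
  assume "al 2 = 0"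
  then have "B569 (e 6) (e 7) = zerov"
    using assms(1) by (auto simp: brc_e_e fun_eq_iff zerov_def lawct_def l569_6_7)
  with assms(2) show False ..
qed

lemma l569_support_sharp:
  assumes "al 1 = 0" "l569 a b h \<noteq> 0"
  shows "2 \<le> h \<and> h + 11 \<le> a + b"
proof -
  have "5 \<le> a \<and> 7 \<le> b \<and> a < b \<and> b \<le> 9" using assms(2) l569_zero by blast
  then have "a \<in> {5, 6, 7, 8}" "b \<in> {7, 8, 9}" by auto
  then show ?thesis using assms by (auto simp: l569_table split: if_splits)
qed

lemma c569_support_sharp:
  assumes "al 1 = 0" "2 \<le> a" "2 \<le> b" "c569 a b h \<noteq> 0"
  shows "2 \<le> h \<and> h + 11 \<le> a + b"
  using assms l569_support_sharp[of a b h] l569_support_sharp[of b a h]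
  by (auto simp: lawct_def split: if_splits)

lemma c569_top_coeff:
  assumes "al 1 = 0" "al 2 \<noteq> 0" "ga 1 \<noteq> 0" "ga 1 + al 2 \<noteq> 0"
    and "i \<le> 8" "j \<le> 8" "i \<noteq> j" "13 \<le> i + j"
  shows "c569 i j (i + j - 11) \<noteq> 0"
proof -
  have "i \<in> {5, 6, 7, 8}" "j \<in> {5, 6, 7, 8}" using assms(5-8) by auto
  then show ?thesis using assms by (auto simp: lawct_def l569_table)
qed

lemma c569_support_lt_right:
  assumes "1 \<le> i" "i \<le> 9" "2 \<le> j" "c569 i j h \<noteq> 0"
  shows "2 \<le> h \<and> h < j"
proof (cases "i = 1")
  case True
  then show ?thesis using assms lawct_one_left[of 5 6 9 al ga be j h] by (simp split: if_splits)
next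
  case False
  then show ?thesis using assms lawct_support[of i j 5 6 9 al ga be h] by simp
qed

lemma c569_one_Suc:
  "2 \<le> t \<Longrightarrow> c569 1 (Suc t) t \<noteq> 0 \<and> (\<forall>h. c569 1 (Suc t) h \<noteq> 0 \<longrightarrow> h \<le> t)"
  using lawct_one_left[of 5 6 9 al ga be "Suc t"] by simp

lemma brsp_V_V_569: "brsp B569 (supported_on {1..9}) (supported_on {1..9}) = supported_on {2..8}"
proof (rule brsp_brc_eq_supported_on_interval)
  fix i j h assume ij: "i \<in> {1..9}" "j \<in> {1..9}" and "c569 i j h \<noteq> 0"
  then show "2 \<le> h \<and> h \<le> 8"
    using c569_support_lt_right[of i j h] c569_support_lt_right[of j i h] lawct_antisym[of 5 6 9 al ga be i j h]
      lawct_one_left[of 5 6 9 al ga be i h]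
    by (cases "j = 1") (auto split: if_splits)
next
  fix t :: nat assume t: "2 \<le> t" "t \<le> 8"
  have "1 \<in> {1..9::nat}" "Suc t \<in> {1..9}" using t by auto
  moreover note c569_one_Suc[OF t(1)]
  ultimately show "\<exists>i\<in>{1..9}. \<exists>j\<in>{1..9}. c569 i j t \<noteq> 0 \<and> (\<forall>h. c569 i j h \<noteq> 0 \<longrightarrow> h \<le> t)"
    by blast
qed auto

lemma brsp_V_supported_on_569:
  assumes "M \<le> 9"
  shows "brsp B569 (supported_on {1..9}) (supported_on {2..M}) = supported_on {2..M - 1}"
proof (rule brsp_brc_eq_supported_on_interval)
  fix i j h assume "i \<in> {1..9}" "j \<in> {2..M}" "c569 i j h \<noteq> 0"
  then show "2 \<le> h \<and> h \<le> M - 1" using c569_support_lt_right[of i j h] by auto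
next
  fix t :: nat assume t: "2 \<le> t" "t \<le> M - 1"
  have "1 \<in> {1..9::nat}" "Suc t \<in> {2..M}" using t by auto
  moreover note c569_one_Suc[OF t(1)]
  ultimately show "\<exists>i\<in>{1..9}. \<exists>j\<in>{2..M}. c569 i j t \<noteq> 0 \<and> (\<forall>h. c569 i j h \<noteq> 0 \<longrightarrow> h \<le> t)"
    by blast
qed (use assms in auto)

lemma brsp_supported_on_V_569:
  assumes "M \<le> 9"
  shows "brsp B569 (supported_on {2..M}) (supported_on {1..9}) = supported_on {2..M - 1}"
proof -
  have "brsp B569 (supported_on {2..M}) (supported_on {1..9})
      = brsp B569 (supported_on {1..9}) (supported_on {2..M})"
    by (rule brsp_swap) (rule lawct_antisym)
  with brsp_V_supported_on_569[OF assms] show ?thesis by simp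
qed

lemma lcs_569: "lcs 9 B569 k = (if k \<le> 1 then supported_on {1..9} else supported_on {2..10 - k})"
proof (induction k)
  case 0
  then show ?case by (simp add: V_eq_supported_on)
next
  case (Suc k)
  show ?case
  proof (cases k)
    case 0
    then show ?thesis by (simp add: V_eq_supported_on)
  next
    case (Suc j)
    then show ?thesis
      using Suc.IH brsp_V_V_569 brsp_supported_on_V_569[of "9 - j"]
      by (cases j) (simp_all add: V_eq_supported_on numeral_eq_Suc)
  qed
qed

lemma brsp_lcs_lcs_569:
  assumes nondeg: "al 1 = 0" "al 2 \<noteq> 0" "ga 1 \<noteq> 0" "ga 1 + al 2 \<noteq> 0"
    and "2 \<le> k" "2 \<le> l"
  shows "brsp B569 (lcs 9 B569 k) (lcs 9 B569 l)
    = supported_on {2..max_distinct_sum (10 - k) (10 - l) - 11}"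
proof -
  define M N where "M = 10 - k" and "N = 10 - l"
  have MN: "M \<le> 8" "N \<le> 8" using assms(5,6) by (auto simp: M_def N_def)
  have "brsp B569 (supported_on {2..M}) (supported_on {2..N})
      = supported_on {2..max_distinct_sum M N - 11}"
  proof (rule brsp_brc_eq_supported_on_interval)
    fix i j h assume ij: "i \<in> {2..M}" "j \<in> {2..N}" and h: "c569 i j h \<noteq> 0"
    then have "i \<noteq> j" using lawct_diag by auto
    then have "i + j \<le> max_distinct_sum M N" using ij by (auto intro: distinct_sum_le)
    then show "2 \<le> h \<and> h \<le> max_distinct_sum M N - 11"
      using c569_support_sharp[OF nondeg(1), of i j h] ij h by auto
  next
    fix t assume t: "2 \<le> t" "t \<le> max_distinct_sum M N - 11"
    have "t + 11 \<le> max_distinct_sum M N" using t by simp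
    then obtain i j where ij: "2 \<le> i" "i \<le> M" "2 \<le> j" "j \<le> N" "i \<noteq> j" "i + j = t + 11"
      using distinct_sum_attained[of "t + 11" M N] MN by auto
    have "c569 i j t \<noteq> 0"
      using c569_top_coeff[OF nondeg, of i j] ij MN t by simp
    moreover have "\<forall>h. c569 i j h \<noteq> 0 \<longrightarrow> h \<le> t"
      using c569_support_sharp[OF nondeg(1), of i j] ij by fastforce
    moreover have "i \<in> {2..M}" "j \<in> {2..N}" using ij by auto
    ultimately show "\<exists>i\<in>{2..M}. \<exists>j\<in>{2..N}. c569 i j t \<noteq> 0 \<and> (\<forall>h. c569 i j h \<noteq> 0 \<longrightarrow> h \<le> t)"
      by blast
  qed (use MN in \<open>auto simp: max_distinct_sum_def\<close>)
  then show ?thesis using assms(5,6) by (simp add: lcs_569 M_def N_def)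
qed

lemma HP_569_apply:
  assumes nondeg: "al 1 = 0" "al 2 \<noteq> 0" "ga 1 \<noteq> 0" "ga 1 + al 2 \<noteq> 0"
    and "1 \<le> k" "1 \<le> l"
  shows "HP 9 B569 (k, l) = (if k = 1 \<or> l = 1 then HP0 9 (k, l)
    else int (max_distinct_sum (10 - k) (10 - l) - 12))"
proof -
  consider "k = 1" "l = 1" | "k = 1" "2 \<le> l" | "2 \<le> k" "l = 1" | "2 \<le> k" "2 \<le> l"
    using assms(5,6) by linarith
  then show ?thesis
  proof cases
    case 1
    then show ?thesis using brsp_V_V_569
      by (simp add: HP_def HP0_apply V_eq_supported_on cdim_supported_on_interval)
  next
    case 2
    then show ?thesis using brsp_V_supported_on_569[of "10 - l"]
      by (simp add: HP_def HP0_apply lcs_569 V_eq_supported_on cdim_supported_on_interval)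
  next
    case 3
    then show ?thesis using brsp_supported_on_V_569[of "10 - k"]
      by (simp add: HP_def HP0_apply lcs_569 V_eq_supported_on cdim_supported_on_interval)
  next
    case 4
    then show ?thesis
      by (simp add: HP_def brsp_lcs_lcs_569[OF nondeg] cdim_supported_on_interval)
  qed
qed

lemma HP_minus_HP0_569:
  assumes nondeg: "al 1 = 0" "al 2 \<noteq> 0" "ga 1 \<noteq> 0" "ga 1 + al 2 \<noteq> 0"
  shows "HP 9 B569 p - HP0 9 p =
    3 * (bimono 2 2 p + bimono 2 3 p + bimono 3 2 p) + 2 * (bimono 2 4 p + bimono 4 2 p)
    + (bimono 2 5 p + bimono 5 2 p) + (bimono 3 3 p + bimono 3 4 p + bimono 4 3 p)"
proof -
  obtain k l where p: "p = (k, l)" by fastforce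
  consider "k = 0 \<or> l = 0" | "1 \<le> k" "1 \<le> l" "k = 1 \<or> l = 1" | "2 \<le> k" "2 \<le> l"
    by linarith
  then show ?thesis
  proof cases
    case 1
    then show ?thesis by (elim disjE) (simp_all add: p HP_def HP0_apply bimono_def)
  next
    case 2
    then show ?thesis by (elim disjE) (simp_all add: p HP_569_apply[OF nondeg] bimono_def)
  next
    case 3
    then show ?thesis
      by (simp add: p HP_569_apply[OF nondeg] HP0_apply max_distinct_sum_hilbert_table)
  qed
qed

end

theorem mainTheorem18:
  fixes al ga :: "nat \<Rightarrow> complex" and be :: "nat \<Rightarrow> nat \<Rightarrow> complex"
  defines "B \<equiv> brc 9 (lawct 5 6 9 al ga be)"
  assumes "lie_alg 9 B"
    and "filiform 9 B"
    and "adapted 9 B"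
    and "is_z1 9 B 5"
    and "is_z2 9 B 6"
  shows "al 1 = 0 \<and> (2 * al 2 + 3 * ga 1) * (al 2 - ga 1) = 0 \<and> ga 1 \<noteq> 0
    \<and> brsp B (lcs 9 B 3) (lcs 9 B 3) = cspan {e 2}
    \<and> brsp B (lcs 9 B 3) (lcs 9 B 4) = cspan {e 2}
    \<and> brsp B (lcs 9 B 3) (lcs 9 B 5) = {zerov}
    \<and> brsp B (lcs 9 B 2) (lcs 9 B 6) = {zerov}
    \<and> brsp B (lcs 9 B 2) (lcs 9 B 5) = cspan {e 2}
    \<and> brsp B (lcs 9 B 2) (lcs 9 B 4) = cspan {e 2, e 3}
    \<and> brsp B (lcs 9 B 2) (lcs 9 B 2) = cspan {e 2, e 3, e 4}
    \<and> brsp B (lcs 9 B 2) (lcs 9 B 3) = cspan {e 2, e 3, e 4}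
    \<and> (\<forall>p. HP 9 B p - HP0 9 p =
          3 * (bimono 2 2 p + bimono 2 3 p + bimono 3 2 p) + 2 * (bimono 2 4 p + bimono 4 2 p)
          + (bimono 2 5 p + bimono 5 2 p) + (bimono 3 3 p + bimono 3 4 p + bimono 4 3 p))"
  \<comment> \<open>The law already encodes the adapted basis, so only the Jacobi identity and \<open>z\<^sub>2 = 6\<close> are needed.\<close>
proof -
  have lie: "lie_alg 9 (B569 al ga be)" using assms(2) unfolding B_def .
  have alpha1: "al 1 = 0" using lie by (rule alpha1_eq_0)
  have relation: "(2 * al 2 + 3 * ga 1) * (al 2 - ga 1) = 0" using lie by (rule alpha_gamma_relation)
  have alpha2: "al 2 \<noteq> 0"
    using alpha2_neq_0[where al = al and ga = ga and be = be, OF alpha1] assms(6)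
    by (simp add: B_def is_z2_def)
  note nondeg = alpha1 alpha2 quadratic_relation_nondegenerate[OF relation alpha2]
  have intervals: "{2..2::nat} = {2}" "{2..3::nat} = {2, 3}" "{2..4::nat} = {2, 3, 4}" by auto
  show ?thesis
    using nondeg relation HP_minus_HP0_569[where al = al and ga = ga and be = be, OF nondeg]
      brsp_lcs_lcs_569[where al = al and ga = ga and be = be, OF nondeg]
    by (simp add: B_def max_distinct_sum_def supported_on_eq_cspan intervals cspan_empty)
qed

end
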